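(* Let $T\ge 2$ and $\sigma_2\in(\tfrac12,1]$. There exist a (finite) standard MDP $\mathcal{M}=\{\mathcal{S},\mathcal{A},P^0,T,r\}$, an SC-MDP $\mathcal{M}_{\mathsf{sc}}=\{\mathcal{S},\mathcal{A},T,r,\mathcal{C},\{\mathcal{P}^i_t\},P^c\}$ with confounder space $\mathcal{C}=\{0,1\}$ that is equivalent to $\mathcal{M}$ (i.e. $\mathbb{E}_{c\sim P^c_t}[\mathcal{P}_t(\cdot\mid s,a,c)]=P^0_t(\cdot\mid s,a)$ for all $t,s,a$), and an initial state distribution $\phi$ on $\mathcal{S}$, such that the following holds. Let $\mathcal{M}_{\mathsf{sc}\text{-}\mathsf{rob}}$ be the RSC-MDP built from $\mathcal{M}_{\mathsf{sc}}$ with the total-variation uncertainty set $\mathcal{U}^{\sigma_2}(P^c)$, and let $\pi^{\star,\sigma_2}_{\mathsf{RSC}}$ be an optimal robust policy of $\mathcal{M}_{\mathsf{sc}\text{-}\mathsf{rob}}$. Then for every $\sigma_1\in[0,1]$, letting $\mathcal{M}_{\mathsf{rob}}$ be the RMDP built from $\mathcal{M}$ with the total-variation uncertainty set $\mathcal{U}^{\sigma_1}(P^0)$ and $\pi^{\star,\sigma_1}_{\mathsf{RMDP}}$ an optimal robust policy of $\mathcal{M}_{\mathsf{rob}}$, $$\widetilde{V}^{\pi^{\star,\sigma_2}_{\mathsf{RSC}},\sigma_2}_1(\phi)-\widetilde{V}^{\pi^{\star,\sigma_1}_{\mathsf{RMDP}},\sigma_2}_1(\phi)\ \ge\ \fr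ac{T}{8}.$$
   Context: Policies are non-stationary stochastic Markov policies $\pi=\{\pi_t\}_{1\le t\le T}$, $\pi_t:\mathcal{S}\to\Delta(\mathcal{A})$. A standard finite-horizon MDP $\{\mathcal{S},\mathcal{A},P,T,r\}$ has transition kernels $P_t(\cdot\mid s,a)\in\Delta(\mathcal{S})$ and rewards $r_t:\mathcal{S}\times\mathcal{A}\to[0,1]$; $V^{\pi,P}_t(s)=\mathbb{E}_{\pi,P}[\sum_{k=t}^T r_k(s_k,a_k)\mid s_t=s]$. RMDP: given nominal kernel $P^0$ and radius $\sigma_1\in[0,1]$, the uncertainty set is $\mathcal{U}^{\sigma_1}(P^0)=\otimes_{t,s,a}\{P_{t,s,a}\in\Delta(\mathcal{S}):\tfrac12\|P_{t,s,a}-P^0_t(\cdot\mid s,a)\|_1\le\sigma_1\}$ ($(s,a)$-rectangular), the robust value is $V^{\pi,\sigma_1}_t(s)=\inf_{P\in\mathcal{U}^{\sigma_1}(P^0)}V^{\pi,P}_t(s)$, and an optimal robust policy of the RMDP is one maximizing $V^{\pi,\sigma_1}_t(s)$ over all policies, for all $t,s$. SC-MDP $\{\mathcal{S},\mathcal{A},T,r,\mathcal{C},\{\mathcal{P}^i_t\},P^c\}$: at step $t$ a confounder $c_t\sim P^c_t\in\Delta(\mathcal{C})$ is drawn, the action $a_t\sim\pi_t(\cdot\mid s_t)$, and $s_{t+1}\sim\mathcal{P}_t(\cdot\mid s_t,a_t,c_t)$ (a kernel on $\mathcal{S}$ whose $i$-th coordinate marginal is $\mathcal{P}^i_t$); rewards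 $r_t(s_t,a_t)$ do not depend on $c_t$. For confounder distributions $P=\{P_t\}$, $\widetilde{V}^{\pi,P}_t(s)=\mathbb{E}[\sum_{k=t}^T r_k(s_k,a_k)\mid s_t=s]$ with $c_k\sim P_k$. RSC-MDP with total variation and radius $\sigma_2$: $\mathcal{U}^{\sigma_2}(P^c)=\otimes_t\{P\in\Delta(\mathcal{C}):\tfrac12\|P-P^c_t\|_1\le\sigma_2\}$, robust SC-value $\widetilde{V}^{\pi,\sigma_2}_t(s)=\inf_{P\in\mathcal{U}^{\sigma_2}(P^c)}\widetilde{V}^{\pi,P}_t(s)$; an optimal robust policy of the RSC-MDP maximizes $\widetilde{V}^{\pi,\sigma_2}_t(s)$ over all policies for all $t,s$. For a distribution $\phi$ on $\mathcal{S}$, $\widetilde{V}^{\pi,\sigma_2}_1(\phi)=\mathbb{E}_{s\sim\phi}[\widetilde{V}^{\pi,\sigma_2}_1(s)]$. *)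

theory Defs
  imports Complex_Main
begin

text \<open>Conventions: states and actions are natural numbers drawn from finite
carriers S and A; time steps are 1..T; the confounder space is {0,1}.
Kernels are functions  P t s a s'  (probability of s' from s under a at step t),
rewards r t s a, policies  \<pi> t s a  (probability of a in state s at step t).\<close>

definition is_dist :: "'a set \<Rightarrow> ('a \<Rightarrow> real) \<Rightarrow> bool" where
  "is_dist X p \<longleftrightarrow> (\<forall>x\<in>X. 0 \<le> p x) \<and> (\<Sum>x\<in>X. p x) = 1"

definition tv_dist :: "'a set \<Rightarrow> ('a \<Rightarrow> real) \<Rightarrow> ('a \<Rightarrow> real) \<Rightarrow> real" where
  "tv_dist X p q = (1/2) * (\<Sum>x\<in>X. \<bar>p x - q x\<bar>)"

definition conf_space :: "nat set" where
  "conf_space = {0, 1}"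

definition is_policy ::
  "nat set \<Rightarrow> nat set \<Rightarrow> nat \<Rightarrow> (nat \<Rightarrow> nat \<Rightarrow> nat \<Rightarrow> real) \<Rightarrow> bool" where
  "is_policy S A T \<pi> \<longleftrightarrow> (\<forall>t\<in>{1..T}. \<forall>s\<in>S. is_dist A (\<pi> t s))"

definition is_kernel ::
  "nat set \<Rightarrow> nat set \<Rightarrow> nat \<Rightarrow> (nat \<Rightarrow> nat \<Rightarrow> nat \<Rightarrow> nat \<Rightarrow> real) \<Rightarrow> bool" where
  "is_kernel S A T P \<longleftrightarrow> (\<forall>t\<in>{1..T}. \<forall>s\<in>S. \<forall>a\<in>A. is_dist S (P t s a))"

definition is_reward ::
  "nat set \<Rightarrow> nat set \<Rightarrow> nat \<Rightarrow> (nat \<Rightarrow> nat \<Rightarrow> nat \<Rightarrow> real) \<Rightarrow> bool" where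
  "is_reward S A T r \<longleftrightarrow> (\<forall>t\<in>{1..T}. \<forall>s\<in>S. \<forall>a\<in>A. 0 \<le> r t s a \<and> r t s a \<le> 1)"

fun val_k ::
  "nat set \<Rightarrow> nat set \<Rightarrow> (nat \<Rightarrow> nat \<Rightarrow> nat \<Rightarrow> real) \<Rightarrow>
   (nat \<Rightarrow> nat \<Rightarrow> nat \<Rightarrow> nat \<Rightarrow> real) \<Rightarrow> (nat \<Rightarrow> nat \<Rightarrow> nat \<Rightarrow> real) \<Rightarrow>
   nat \<Rightarrow> nat \<Rightarrow> nat \<Rightarrow> real" where
  "val_k S A r P \<pi> 0 t s = 0"
| "val_k S A r P \<pi> (Suc k) t s =
     (\<Sum>a\<in>A. \<pi> t s a * (r t s a + (\<Sum>s'\<in>S. P t s a s' * val_k S A r P \<pi> k (Suc t) s')))"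

definition fh_value ::
  "nat set \<Rightarrow> nat set \<Rightarrow> nat \<Rightarrow> (nat \<Rightarrow> nat \<Rightarrow> nat \<Rightarrow> real) \<Rightarrow>
   (nat \<Rightarrow> nat \<Rightarrow> nat \<Rightarrow> nat \<Rightarrow> real) \<Rightarrow> (nat \<Rightarrow> nat \<Rightarrow> nat \<Rightarrow> real) \<Rightarrow>
   nat \<Rightarrow> nat \<Rightarrow> real" where
  "fh_value S A T r P \<pi> t s = val_k S A r P \<pi> (Suc T - t) t s"

definition unc_rmdp ::
  "nat set \<Rightarrow> nat set \<Rightarrow> nat \<Rightarrow> (nat \<Rightarrow> nat \<Rightarrow> nat \<Rightarrow> nat \<Rightarrow> real) \<Rightarrow> real \<Rightarrow>
   (nat \<Rightarrow> nat \<Rightarrow> nat \<Rightarrow> nat \<Rightarrow> real) set" where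
  "unc_rmdp S A T P0 \<sigma> = {P. \<forall>t\<in>{1..T}. \<forall>s\<in>S. \<forall>a\<in>A.
       is_dist S (P t s a) \<and> tv_dist S (P t s a) (P0 t s a) \<le> \<sigma>}"

definition robust_value ::
  "nat set \<Rightarrow> nat set \<Rightarrow> nat \<Rightarrow> (nat \<Rightarrow> nat \<Rightarrow> nat \<Rightarrow> real) \<Rightarrow>
   (nat \<Rightarrow> nat \<Rightarrow> nat \<Rightarrow> nat \<Rightarrow> real) \<Rightarrow> real \<Rightarrow> (nat \<Rightarrow> nat \<Rightarrow> nat \<Rightarrow> real) \<Rightarrow>
   nat \<Rightarrow> nat \<Rightarrow> real" where
  "robust_value S A T r P0 \<sigma> \<pi> t s =
     (INF P \<in> unc_rmdp S A T P0 \<sigma>. fh_value S A T r P \<pi> t s)"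

definition optimal_rmdp_policy ::
  "nat set \<Rightarrow> nat set \<Rightarrow> nat \<Rightarrow> (nat \<Rightarrow> nat \<Rightarrow> nat \<Rightarrow> real) \<Rightarrow>
   (nat \<Rightarrow> nat \<Rightarrow> nat \<Rightarrow> nat \<Rightarrow> real) \<Rightarrow> real \<Rightarrow> (nat \<Rightarrow> nat \<Rightarrow> nat \<Rightarrow> real) \<Rightarrow> bool" where
  "optimal_rmdp_policy S A T r P0 \<sigma> \<pi> \<longleftrightarrow> is_policy S A T \<pi> \<and>
     (\<forall>\<pi>'. is_policy S A T \<pi>' \<longrightarrow> (\<forall>t\<in>{1..T}. \<forall>s\<in>S.
        robust_value S A T r P0 \<sigma> \<pi>' t s \<le> robust_value S A T r P0 \<sigma> \<pi> t s))"

text \<open>SC-MDP: K t s a c s' is the kernel P_t(s'|s,a,c); Pc t c the confounder law.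
Under confounder laws Q, the induced state kernel is sum_c Q t c * K t s a c s'.\<close>
definition sc_kernel ::
  "(nat \<Rightarrow> nat \<Rightarrow> nat \<Rightarrow> nat \<Rightarrow> nat \<Rightarrow> real) \<Rightarrow> (nat \<Rightarrow> nat \<Rightarrow> real) \<Rightarrow>
   nat \<Rightarrow> nat \<Rightarrow> nat \<Rightarrow> nat \<Rightarrow> real" where
  "sc_kernel K Q t s a s' = (\<Sum>c\<in>conf_space. Q t c * K t s a c s')"

definition sc_value ::
  "nat set \<Rightarrow> nat set \<Rightarrow> nat \<Rightarrow> (nat \<Rightarrow> nat \<Rightarrow> nat \<Rightarrow> real) \<Rightarrow>
   (nat \<Rightarrow> nat \<Rightarrow> nat \<Rightarrow> nat \<Rightarrow> nat \<Rightarrow> real) \<Rightarrow> (nat \<Rightarrow> nat \<Rightarrow> real) \<Rightarrow>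
   (nat \<Rightarrow> nat \<Rightarrow> nat \<Rightarrow> real) \<Rightarrow> nat \<Rightarrow> nat \<Rightarrow> real" where
  "sc_value S A T r K Q \<pi> t s = fh_value S A T r (sc_kernel K Q) \<pi> t s"

definition unc_sc :: "nat \<Rightarrow> (nat \<Rightarrow> nat \<Rightarrow> real) \<Rightarrow> real \<Rightarrow> (nat \<Rightarrow> nat \<Rightarrow> real) set" where
  "unc_sc T Pc \<sigma> = {Q. \<forall>t\<in>{1..T}. is_dist conf_space (Q t) \<and> tv_dist conf_space (Q t) (Pc t) \<le> \<sigma>}"

definition robust_sc_value ::
  "nat set \<Rightarrow> nat set \<Rightarrow> nat \<Rightarrow> (nat \<Rightarrow> nat \<Rightarrow> nat \<Rightarrow> real) \<Rightarrow>
   (nat \<Rightarrow> nat \<Rightarrow> nat \<Rightarrow> nat \<Rightarrow> nat \<Rightarrow> real) \<Rightarrow> (nat \<Rightarrow> nat \<Rightarrow> real) \<Rightarrow> real \<Rightarrow>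
   (nat \<Rightarrow> nat \<Rightarrow> nat \<Rightarrow> real) \<Rightarrow> nat \<Rightarrow> nat \<Rightarrow> real" where
  "robust_sc_value S A T r K Pc \<sigma> \<pi> t s =
     (INF Q \<in> unc_sc T Pc \<sigma>. sc_value S A T r K Q \<pi> t s)"

definition optimal_rsc_policy ::
  "nat set \<Rightarrow> nat set \<Rightarrow> nat \<Rightarrow> (nat \<Rightarrow> nat \<Rightarrow> nat \<Rightarrow> real) \<Rightarrow>
   (nat \<Rightarrow> nat \<Rightarrow> nat \<Rightarrow> nat \<Rightarrow> nat \<Rightarrow> real) \<Rightarrow> (nat \<Rightarrow> nat \<Rightarrow> real) \<Rightarrow> real \<Rightarrow>
   (nat \<Rightarrow> nat \<Rightarrow> nat \<Rightarrow> real) \<Rightarrow> bool" where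
  "optimal_rsc_policy S A T r K Pc \<sigma> \<pi> \<longleftrightarrow> is_policy S A T \<pi> \<and>
     (\<forall>\<pi>'. is_policy S A T \<pi>' \<longrightarrow> (\<forall>t\<in>{1..T}. \<forall>s\<in>S.
        robust_sc_value S A T r K Pc \<sigma> \<pi>' t s \<le> robust_sc_value S A T r K Pc \<sigma> \<pi> t s))"

definition is_sc_mdp ::
  "nat set \<Rightarrow> nat set \<Rightarrow> nat \<Rightarrow> (nat \<Rightarrow> nat \<Rightarrow> nat \<Rightarrow> nat \<Rightarrow> nat \<Rightarrow> real) \<Rightarrow>
   (nat \<Rightarrow> nat \<Rightarrow> real) \<Rightarrow> bool" where
  "is_sc_mdp S A T K Pc \<longleftrightarrow>
     (\<forall>t\<in>{1..T}. is_dist conf_space (Pc t)) \<and>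
     (\<forall>t\<in>{1..T}. \<forall>s\<in>S. \<forall>a\<in>A. \<forall>c\<in>conf_space. is_dist S (K t s a c))"

definition sc_equivalent ::
  "nat set \<Rightarrow> nat set \<Rightarrow> nat \<Rightarrow> (nat \<Rightarrow> nat \<Rightarrow> nat \<Rightarrow> nat \<Rightarrow> real) \<Rightarrow>
   (nat \<Rightarrow> nat \<Rightarrow> nat \<Rightarrow> nat \<Rightarrow> nat \<Rightarrow> real) \<Rightarrow> (nat \<Rightarrow> nat \<Rightarrow> real) \<Rightarrow> bool" where
  "sc_equivalent S A T P0 K Pc \<longleftrightarrow>
     (\<forall>t\<in>{1..T}. \<forall>s\<in>S. \<forall>a\<in>A. \<forall>s'\<in>S. sc_kernel K Pc t s a s' = P0 t s a s')"

end

theory Submission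
  imports Defs
begin

(* Take two states, a good state 0 (reward 1 under both actions) and a bad state 1 (reward 1/8
   under action 0, reward 0 under action 1).  Action 1 moves to a uniformly random state whatever
   the confounder, action 0 moves to the state named by the confounder c \<in> {0,1}; under the
   uniform confounder law both actions therefore induce the uniform nominal kernel.
   The RMDP cannot tell the actions apart: its worst kernel tilts mass towards state 1 in the same
   way for both actions, so only the immediate reward matters and every optimal RMDP policy plays
   action 0 in state 1.  An RSC adversary with \<sigma>\<^sub>2 > 1/2 may fix the confounder to 1, which
   traps action 0 in the bad state: from state 1 the RMDP policy earns T/8, whereas always playing
   action 1 earns (T - 1)/2 against every confounder law, and (T - 1)/2 - T/8 \<ge> T/8 for T \<ge> 2. *)

definition det_policy :: "nat \<Rightarrow> nat \<Rightarrow> nat \<Rightarrow> nat \<Rightarrow> real" where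
  "det_policy b t s a = of_bool (a = b)"

lemma det_policy_is_policy:
  assumes "finite A" "b \<in> A"
  shows "is_policy S A T (det_policy b)"
  using assms unfolding is_policy_def is_dist_def det_policy_def by (simp add: Int_insert_right)

lemma val_k_nonneg:
  assumes "\<And>t' s a. t \<le> t' \<Longrightarrow> t' < t + k \<Longrightarrow> s \<in> S \<Longrightarrow> a \<in> A \<Longrightarrow>
      0 \<le> \<pi> t' s a \<and> 0 \<le> r t' s a \<and> (\<forall>s'\<in>S. 0 \<le> P t' s a s')"
    and "s \<in> S"
  shows "0 \<le> val_k S A r P \<pi> k t s"
  using assms
proof (induction k arbitrary: t s)
  case 0
  then show ?case by simp
next
  case (Suc k)
  have "0 \<le> val_k S A r P \<pi> k (Suc t) s'" if "s' \<in> S" for s'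
    using Suc.prems(1) that by (intro Suc.IH) auto
  then show ?case
    using Suc.prems(1)[of t] Suc.prems(2)
    by (auto intro!: sum_nonneg mult_nonneg_nonneg add_nonneg_nonneg)
qed

lemma fh_value_nonneg:
  assumes "is_policy S A T \<pi>" "is_reward S A T r"
    and "\<And>t s a s'. t \<in> {1..T} \<Longrightarrow> s \<in> S \<Longrightarrow> a \<in> A \<Longrightarrow> s' \<in> S \<Longrightarrow> 0 \<le> P t s a s'"
    and "1 \<le> t" "s \<in> S"
  shows "0 \<le> fh_value S A T r P \<pi> t s"
  unfolding fh_value_def
proof (rule val_k_nonneg[OF _ \<open>s \<in> S\<close>])
  fix t' s a assume "t \<le> t'" "t' < t + (Suc T - t)" "s \<in> S" "a \<in> A"
  moreover from this have "t' \<in> {1..T}" using \<open>1 \<le> t\<close> by auto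
  ultimately show "0 \<le> \<pi> t' s a \<and> 0 \<le> r t' s a \<and> (\<forall>s'\<in>S. 0 \<le> P t' s a s')"
    using assms(1-3) unfolding is_policy_def is_reward_def is_dist_def by blast
qed

lemma robust_value_le_fh_value:
  assumes "P \<in> unc_rmdp S A T P0 \<sigma>" "is_policy S A T \<pi>" "is_reward S A T r" "1 \<le> t" "s \<in> S"
  shows "robust_value S A T r P0 \<sigma> \<pi> t s \<le> fh_value S A T r P \<pi> t s"
  unfolding robust_value_def
proof (rule cINF_lower[OF bdd_belowI assms(1)])
  fix x assume "x \<in> (\<lambda>P. fh_value S A T r P \<pi> t s) ` unc_rmdp S A T P0 \<sigma>"
  then obtain P' where "P' \<in> unc_rmdp S A T P0 \<sigma>" and x: "x = fh_value S A T r P' \<pi> t s"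
    by blast
  then have "0 \<le> fh_value S A T r P' \<pi> t s"
    using assms(2-5) by (intro fh_value_nonneg) (auto simp: unc_rmdp_def is_dist_def)
  then show "0 \<le> x" unfolding x .
qed

lemma robust_sc_value_le_sc_value:
  assumes "Q \<in> unc_sc T Pc \<sigma>" "is_sc_mdp S A T K Pc" "is_policy S A T \<pi>" "is_reward S A T r"
    and "1 \<le> t" "s \<in> S"
  shows "robust_sc_value S A T r K Pc \<sigma> \<pi> t s \<le> sc_value S A T r K Q \<pi> t s"
  unfolding robust_sc_value_def
proof (rule cINF_lower[OF bdd_belowI assms(1)])
  fix x assume "x \<in> (\<lambda>Q. sc_value S A T r K Q \<pi> t s) ` unc_sc T Pc \<sigma>"
  then obtain Q' where Q': "Q' \<in> unc_sc T Pc \<sigma>" and x: "x = sc_value S A T r K Q' \<pi> t s"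
    by blast
  have "0 \<le> sc_kernel K Q' t' s a s'"
    if "t' \<in> {1..T}" "s \<in> S" "a \<in> A" "s' \<in> S" for t' s a s'
    using Q' assms(2) that unfolding sc_kernel_def unc_sc_def is_sc_mdp_def is_dist_def
    by (auto intro!: sum_nonneg)
  then have "0 \<le> sc_value S A T r K Q' \<pi> t s"
    unfolding sc_value_def using assms(3-6) by (intro fh_value_nonneg)
  then show "0 \<le> x" unfolding x .
qed

lemma val_k_Suc_det_policy:
  assumes "finite A" "b \<in> A"
  shows "val_k S A r P (det_policy b) (Suc k) t s
       = r t s b + (\<Sum>s'\<in>S. P t s b s' * val_k S A r P (det_policy b) k (Suc t) s')"
proof -
  have "A \<inter> {a. a = b} = {b}" using assms(2) by blast
  with assms(1) show ?thesis by (simp add: det_policy_def)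
qed

lemma val_k_Suc_greedy_step:
  assumes "finite A" "b \<in> A" "s \<in> S"
    and action_indep: "\<And>a. a \<in> A \<Longrightarrow> P t s a = P t s b"
    and kernel_nonneg: "\<And>s'. s' \<in> S \<Longrightarrow> 0 \<le> P t s b s'"
    and "is_dist A (\<pi> t s)"
    and tail: "\<And>s'. s' \<in> S \<Longrightarrow>
      val_k S A r P \<pi> k (Suc t) s' \<le> val_k S A r P (det_policy b) k (Suc t) s'"
  shows "val_k S A r P \<pi> (Suc k) t s + (\<Sum>a\<in>A. \<pi> t s a * (r t s b - r t s a))
       \<le> val_k S A r P (det_policy b) (Suc k) t s"
proof -
  let ?W = "\<lambda>\<rho>. \<Sum>s'\<in>S. P t s b s' * val_k S A r P \<rho> k (Suc t) s'"
  have total: "(\<Sum>a\<in>A. \<pi> t s a) = 1"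
    using \<open>is_dist A (\<pi> t s)\<close> unfolding is_dist_def by simp
  have "val_k S A r P \<pi> (Suc k) t s = (\<Sum>a\<in>A. \<pi> t s a * (r t s a + ?W \<pi>))"
    using action_indep by simp
  also have "\<dots> = (\<Sum>a\<in>A. \<pi> t s a * r t s a) + ?W \<pi>"
    using total by (simp add: distrib_left sum.distrib flip: sum_distrib_right)
  finally have val_\<pi>: "val_k S A r P \<pi> (Suc k) t s = (\<Sum>a\<in>A. \<pi> t s a * r t s a) + ?W \<pi>" .
  have gap: "(\<Sum>a\<in>A. \<pi> t s a * (r t s b - r t s a)) = r t s b - (\<Sum>a\<in>A. \<pi> t s a * r t s a)"
    using total by (simp add: right_diff_distrib sum_subtractf flip: sum_distrib_right)
  have "?W \<pi> \<le> ?W (det_policy b)"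
    using tail kernel_nonneg by (intro sum_mono mult_left_mono) auto
  then show ?thesis
    unfolding val_\<pi> gap val_k_Suc_det_policy[OF assms(1,2)] by simp
qed

lemma val_k_greedy_le:
  assumes "finite A" "b \<in> A" "s \<in> S"
    and greedy: "\<And>t s a. s \<in> S \<Longrightarrow> a \<in> A \<Longrightarrow> r t s a \<le> r t s b"
    and action_indep: "\<And>t s a. s \<in> S \<Longrightarrow> a \<in> A \<Longrightarrow> P t s a = P t s b"
    and kernel_nonneg: "\<And>t s s'. s \<in> S \<Longrightarrow> s' \<in> S \<Longrightarrow> 0 \<le> P t s b s'"
    and policy: "\<And>t' s. t \<le> t' \<Longrightarrow> t' < t + k \<Longrightarrow> s \<in> S \<Longrightarrow> is_dist A (\<pi> t' s)"
  shows "val_k S A r P \<pi> k t s \<le> val_k S A r P (det_policy b) k t s"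
  using \<open>s \<in> S\<close> policy
proof (induction k arbitrary: t s)
  case 0
  then show ?case by simp
next
  case (Suc k)
  have "val_k S A r P \<pi> (Suc k) t s + (\<Sum>a\<in>A. \<pi> t s a * (r t s b - r t s a))
      \<le> val_k S A r P (det_policy b) (Suc k) t s"
    using Suc.prems by (intro val_k_Suc_greedy_step assms(1,2) action_indep kernel_nonneg Suc.IH) auto
  moreover have "0 \<le> (\<Sum>a\<in>A. \<pi> t s a * (r t s b - r t s a))"
    using Suc.prems(2)[of t s] Suc.prems(1) greedy
    by (auto simp: is_dist_def intro!: sum_nonneg mult_nonneg_nonneg)
  ultimately show ?case by linarith
qed

lemma is_dist_two_point: "is_dist {0,1::nat} p \<longleftrightarrow> 0 \<le> p 0 \<and> 0 \<le> p 1 \<and> p 0 + p 1 = 1"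
  unfolding is_dist_def by simp

lemma tv_dist_uniform_two_point:
  assumes "is_dist {0,1::nat} p"
  shows "tv_dist {0,1} p (\<lambda>_. 1/2) = \<bar>p 1 - 1/2\<bar>"
  using assms unfolding is_dist_def tv_dist_def by (simp add: abs_if)

lemma val_k_two_point:
  "val_k {0,1} {0,1} r P \<pi> (Suc k) t s =
     \<pi> t s 0 * (r t s 0 + (P t s 0 0 * val_k {0,1} {0,1} r P \<pi> k (Suc t) 0
                          + P t s 0 1 * val_k {0,1} {0,1} r P \<pi> k (Suc t) 1))
   + \<pi> t s 1 * (r t s 1 + (P t s 1 0 * val_k {0,1} {0,1} r P \<pi> k (Suc t) 0
                          + P t s 1 1 * val_k {0,1} {0,1} r P \<pi> k (Suc t) 1))"
  by simp

lemma sc_kernel_two_point: "sc_kernel K Q t s a s' = Q t 0 * K t s a 0 s' + Q t 1 * K t s a 1 s'"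
  unfolding sc_kernel_def conf_space_def by simp

definition ex_reward :: "nat \<Rightarrow> nat \<Rightarrow> nat \<Rightarrow> real" where
  "ex_reward t s a = (if s = 0 then 1 else if a = 0 then 1/8 else 0)"

definition ex_conf_kernel :: "nat \<Rightarrow> nat \<Rightarrow> nat \<Rightarrow> nat \<Rightarrow> nat \<Rightarrow> real" where
  "ex_conf_kernel t s a c s' = (if a = 0 then of_bool (s' = c) else 1/2)"

definition tilted_kernel :: "real \<Rightarrow> nat \<Rightarrow> nat \<Rightarrow> nat \<Rightarrow> nat \<Rightarrow> real" where
  "tilted_kernel q t s a = (\<lambda>s'. if s' = 1 then q else 1 - q)"

definition point_conf :: "nat \<Rightarrow> nat \<Rightarrow> nat \<Rightarrow> real" where
  "point_conf c t c' = of_bool (c' = c)"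

lemma tilted_kernel_simps: "tilted_kernel q t s a 0 = 1 - q" "tilted_kernel q t s a 1 = q"
  by (simp_all add: tilted_kernel_def)

(* Stated for s \<noteq> 0 rather than s = 1 because the simplifier rewrites 1 :: nat to Suc 0. *)
lemma ex_reward_simps [simp]:
  "ex_reward t 0 a = 1"
  "s \<noteq> 0 \<Longrightarrow> ex_reward t s 0 = 1/8"
  "s \<noteq> 0 \<Longrightarrow> a \<noteq> 0 \<Longrightarrow> ex_reward t s a = 0"
  by (simp_all add: ex_reward_def)

lemma ex_reward_greedy: "ex_reward t s a \<le> ex_reward t s 0"
  by (simp add: ex_reward_def)

lemma ex_is_reward: "is_reward S A T ex_reward"
  unfolding is_reward_def ex_reward_def by simp

lemma ex_is_sc_mdp: "is_sc_mdp {0,1} A T ex_conf_kernel (\<lambda>t c. 1/2)"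
  unfolding is_sc_mdp_def is_dist_two_point conf_space_def ex_conf_kernel_def by simp

lemma tilted_kernel_mem_unc_rmdp:
  assumes "0 \<le> \<sigma>"
  shows "tilted_kernel (min 1 (1/2 + \<sigma>)) \<in> unc_rmdp {0,1} A T (\<lambda>t s a s'. 1/2) \<sigma>"
proof -
  let ?q = "min 1 (1/2 + \<sigma>)"
  have dist: "is_dist {0,1} (tilted_kernel ?q t s a)" for t s a
    unfolding is_dist_two_point tilted_kernel_def using assms by simp
  moreover have "tv_dist {0,1} (tilted_kernel ?q t s a) (\<lambda>_. 1/2) \<le> \<sigma>" for t s a
    using assms unfolding tv_dist_uniform_two_point[OF dist] by (simp add: tilted_kernel_def)
  ultimately show ?thesis
    unfolding unc_rmdp_def by blast
qed

lemma unc_rmdp_uniform_mass_state0: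
  assumes "P \<in> unc_rmdp {0,1} A T (\<lambda>t s a s'. 1/2) \<sigma>" "t \<in> {1..T}" "s \<in> {0,1}" "a \<in> A"
  shows "is_dist {0,1} (P t s a) \<and> 1/2 - \<sigma> \<le> P t s a 0"
proof -
  have dist: "is_dist {0,1} (P t s a)" and tv: "tv_dist {0,1} (P t s a) (\<lambda>_. 1/2) \<le> \<sigma>"
    using assms unfolding unc_rmdp_def by auto
  from tv have "\<bar>P t s a 1 - 1/2\<bar> \<le> \<sigma>"
    unfolding tv_dist_uniform_two_point[OF dist] .
  with dist show ?thesis
    unfolding is_dist_two_point by linarith
qed

lemma val_k_tilted_action0_bad_le_good:
  "val_k {0,1} {0,1} ex_reward (tilted_kernel q) (det_policy 0) k t 1
   \<le> val_k {0,1} {0,1} ex_reward (tilted_kernel q) (det_policy 0) k t 0"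
  by (cases k) (simp_all add: det_policy_def tilted_kernel_def)

lemma val_k_tilted_action0_le:
  assumes "\<And>t' s. t \<le> t' \<Longrightarrow> t' < t + k \<Longrightarrow> s \<in> {0,1} \<Longrightarrow>
      is_dist {0,1} (P t' s 0) \<and> 1 - q \<le> P t' s 0 0"
    and "s \<in> {0,1}"
  shows "val_k {0,1} {0,1} ex_reward (tilted_kernel q) (det_policy 0) k t s
       \<le> val_k {0,1} {0,1} ex_reward P (det_policy 0) k t s"
  using assms
proof (induction k arbitrary: t s)
  case 0
  then show ?case by simp
next
  case (Suc k)
  define a0 where "a0 = val_k {0,1} {0,1} ex_reward (tilted_kernel q) (det_policy 0) k (Suc t) 0"
  define a1 where "a1 = val_k {0,1} {0,1} ex_reward (tilted_kernel q) (det_policy 0) k (Suc t) 1"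
  define b0 where "b0 = val_k {0,1} {0,1} ex_reward P (det_policy 0) k (Suc t) 0"
  define b1 where "b1 = val_k {0,1} {0,1} ex_reward P (det_policy 0) k (Suc t) 1"
  have "a0 \<le> b0" "a1 \<le> b1"
    unfolding a0_def a1_def b0_def b1_def by (rule Suc.IH; use Suc.prems(1) in auto)+
  have "a1 \<le> a0"
    unfolding a0_def a1_def by (rule val_k_tilted_action0_bad_le_good)
  have "0 \<le> P t s 0 0" "0 \<le> P t s 0 1" and P1: "P t s 0 1 = 1 - P t s 0 0"
    and "1 - q \<le> P t s 0 0"
    using Suc.prems(1)[of t s] Suc.prems(2) unfolding is_dist_two_point by auto
  \<comment> \<open>moving mass from the good state 0 to the bad state 1 can only lose value\<close>
  have "(1 - q) * a0 + q * a1 = a1 + (1 - q) * (a0 - a1)"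
    by (simp add: algebra_simps)
  also have "\<dots> \<le> a1 + P t s 0 0 * (a0 - a1)"
    using \<open>1 - q \<le> P t s 0 0\<close> \<open>a1 \<le> a0\<close> by (simp add: mult_right_mono)
  also have "\<dots> = P t s 0 0 * a0 + P t s 0 1 * a1"
    unfolding P1 by (simp add: algebra_simps)
  also have "\<dots> \<le> P t s 0 0 * b0 + P t s 0 1 * b1"
    using \<open>a0 \<le> b0\<close> \<open>a1 \<le> b1\<close> \<open>0 \<le> P t s 0 0\<close> \<open>0 \<le> P t s 0 1\<close>
    by (intro add_mono mult_left_mono)
  finally have "(1 - q) * a0 + q * a1 \<le> P t s 0 0 * b0 + P t s 0 1 * b1" .
  then show ?case
    unfolding val_k_two_point tilted_kernel_simps
      a0_def[symmetric] a1_def[symmetric] b0_def[symmetric] b1_def[symmetric]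
    by (simp add: det_policy_def)
qed

lemma fh_value_tilted_action0_le_robust_value:
  assumes "0 \<le> \<sigma>" "1 \<le> t" "s \<in> {0,1}"
  shows "fh_value {0,1} {0,1} T ex_reward (tilted_kernel (min 1 (1/2 + \<sigma>))) (det_policy 0) t s
       \<le> robust_value {0,1} {0,1} T ex_reward (\<lambda>t s a s'. 1/2) \<sigma> (det_policy 0) t s"
  unfolding robust_value_def
proof (rule cINF_greatest)
  show "unc_rmdp {0,1} {0,1} T (\<lambda>t s a s'. 1/2) \<sigma> \<noteq> {}"
    using tilted_kernel_mem_unc_rmdp[OF \<open>0 \<le> \<sigma>\<close>] by blast
next
  fix P assume P: "P \<in> unc_rmdp {0,1} {0,1} T (\<lambda>t s a s'. 1/2) \<sigma>"
  show "fh_value {0,1} {0,1} T ex_reward (tilted_kernel (min 1 (1/2 + \<sigma>))) (det_policy 0) t s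
      \<le> fh_value {0,1} {0,1} T ex_reward P (det_policy 0) t s"
    unfolding fh_value_def
  proof (rule val_k_tilted_action0_le[OF _ \<open>s \<in> {0,1}\<close>])
    fix t' s' assume "t \<le> t'" "t' < t + (Suc T - t)" "s' \<in> {0,1::nat}"
    moreover from this have "t' \<in> {1..T}" using \<open>1 \<le> t\<close> by auto
    ultimately have "is_dist {0,1} (P t' s' 0) \<and> 1/2 - \<sigma> \<le> P t' s' 0 0"
      using unc_rmdp_uniform_mass_state0[OF P] by blast
    then show "is_dist {0,1} (P t' s' 0) \<and> 1 - min 1 (1/2 + \<sigma>) \<le> P t' s' 0 0"
      unfolding is_dist_two_point by auto
  qed
qed

lemma fh_value_tilted_gap:
  assumes "is_policy {0,1} {0,1} T \<pi>" "0 \<le> q" "q \<le> 1" "t \<in> {1..T}"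
  shows "fh_value {0,1} {0,1} T ex_reward (tilted_kernel q) \<pi> t 1 + \<pi> t 1 1 / 8
       \<le> fh_value {0,1} {0,1} T ex_reward (tilted_kernel q) (det_policy 0) t 1"
proof -
  have horizon: "Suc T - t = Suc (T - t)"
    using \<open>t \<in> {1..T}\<close> by (simp add: Suc_diff_le)
  have action_indep: "tilted_kernel q t' s a = tilted_kernel q t' s 0" for t' s a
    by (simp add: tilted_kernel_def)
  have kernel_nonneg: "0 \<le> tilted_kernel q t' s 0 s'" for t' s s'
    using assms(2,3) by (simp add: tilted_kernel_def)
  have policy: "is_dist {0,1} (\<pi> t' s)" if "t \<le> t'" "t' \<le> T" "s \<in> {0,1}" for t' s
    using assms(1,4) that unfolding is_policy_def by auto
  have "val_k {0,1} {0,1} ex_reward (tilted_kernel q) \<pi> (Suc (T - t)) t 1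
      + (\<Sum>a\<in>{0,1}. \<pi> t 1 a * (ex_reward t 1 0 - ex_reward t 1 a))
      \<le> val_k {0,1} {0,1} ex_reward (tilted_kernel q) (det_policy 0) (Suc (T - t)) t 1"
  proof (rule val_k_Suc_greedy_step)
    show "is_dist {0,1} (\<pi> t 1)" using policy assms(4) by auto
    show "val_k {0,1} {0,1} ex_reward (tilted_kernel q) \<pi> (T - t) (Suc t) s'
        \<le> val_k {0,1} {0,1} ex_reward (tilted_kernel q) (det_policy 0) (T - t) (Suc t) s'"
      if "s' \<in> {0,1}" for s'
    proof (rule val_k_greedy_le)
      fix t' s assume "Suc t \<le> t'" "t' < Suc t + (T - t)" "s \<in> {0,1::nat}"
      then show "is_dist {0,1} (\<pi> t' s)"
        using assms(4) by (intro policy) auto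
    qed (use that in \<open>auto intro: action_indep kernel_nonneg ex_reward_greedy\<close>)
  qed (auto intro: action_indep kernel_nonneg)
  moreover have "(\<Sum>a\<in>{0,1}. \<pi> t 1 a * (ex_reward t 1 0 - ex_reward t 1 a)) = \<pi> t 1 1 / 8"
    by simp
  ultimately show ?thesis
    unfolding fh_value_def horizon by linarith
qed

lemma optimal_rmdp_policy_avoids_action1:
  assumes opt: "optimal_rmdp_policy {0,1} {0,1} T ex_reward (\<lambda>t s a s'. 1/2) \<sigma> \<pi>"
    and "0 \<le> \<sigma>" "t \<in> {1..T}"
  shows "\<pi> t 1 1 = 0"
proof -
  let ?q = "min 1 (1/2 + \<sigma>)"
  let ?R = "robust_value {0,1} {0,1} T ex_reward (\<lambda>t s a s'. 1/2) \<sigma>"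
  have \<pi>: "is_policy {0,1} {0,1} T \<pi>"
    using opt unfolding optimal_rmdp_policy_def by simp
  have "fh_value {0,1} {0,1} T ex_reward (tilted_kernel ?q) \<pi> t 1 + \<pi> t 1 1 / 8
      \<le> fh_value {0,1} {0,1} T ex_reward (tilted_kernel ?q) (det_policy 0) t 1"
    using \<pi> \<open>0 \<le> \<sigma>\<close> \<open>t \<in> {1..T}\<close> by (intro fh_value_tilted_gap) auto
  also have "\<dots> \<le> ?R (det_policy 0) t 1"
    using \<open>0 \<le> \<sigma>\<close> \<open>t \<in> {1..T}\<close> by (intro fh_value_tilted_action0_le_robust_value) auto
  also have "\<dots> \<le> ?R \<pi> t 1"
    using opt det_policy_is_policy[of "{0,1}" 0] \<open>t \<in> {1..T}\<close>
    unfolding optimal_rmdp_policy_def by simp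
  also have "\<dots> \<le> fh_value {0,1} {0,1} T ex_reward (tilted_kernel ?q) \<pi> t 1"
    using \<pi> \<open>t \<in> {1..T}\<close>
    by (intro robust_value_le_fh_value tilted_kernel_mem_unc_rmdp \<open>0 \<le> \<sigma>\<close> ex_is_reward) auto
  finally have "\<pi> t 1 1 \<le> 0" by simp
  moreover have "0 \<le> \<pi> t 1 1"
    using \<pi> \<open>t \<in> {1..T}\<close> unfolding is_policy_def is_dist_def by simp
  ultimately show ?thesis by simp
qed

lemma sc_kernel_ex_action1:
  assumes "Q t 0 + Q t 1 = 1"
  shows "sc_kernel ex_conf_kernel Q t s 1 s' = 1/2"
proof -
  have "sc_kernel ex_conf_kernel Q t s 1 s' = (Q t 0 + Q t 1) / 2"
    unfolding sc_kernel_two_point ex_conf_kernel_def by simp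
  with assms show ?thesis by simp
qed

lemma val_k_ex_action1_Suc:
  assumes "Q t 0 + Q t 1 = 1"
  shows "val_k {0,1} {0,1} ex_reward (sc_kernel ex_conf_kernel Q) (det_policy 1) (Suc k) t s
       = ex_reward t s 1
         + (val_k {0,1} {0,1} ex_reward (sc_kernel ex_conf_kernel Q) (det_policy 1) k (Suc t) 0
          + val_k {0,1} {0,1} ex_reward (sc_kernel ex_conf_kernel Q) (det_policy 1) k (Suc t) 1) / 2"
  unfolding val_k_two_point sc_kernel_ex_action1[where Q = Q and t = t, OF assms] by (simp add: det_policy_def)

lemma val_k_ex_action1_sum:
  assumes "\<And>t'. t \<le> t' \<Longrightarrow> t' < t + k \<Longrightarrow> Q t' 0 + Q t' 1 = 1"
  shows "val_k {0,1} {0,1} ex_reward (sc_kernel ex_conf_kernel Q) (det_policy 1) k t 0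
       + val_k {0,1} {0,1} ex_reward (sc_kernel ex_conf_kernel Q) (det_policy 1) k t 1 = real k"
  using assms
proof (induction k arbitrary: t)
  case 0
  then show ?case by simp
next
  case (Suc k)
  have "val_k {0,1} {0,1} ex_reward (sc_kernel ex_conf_kernel Q) (det_policy 1) k (Suc t) 0
      + val_k {0,1} {0,1} ex_reward (sc_kernel ex_conf_kernel Q) (det_policy 1) k (Suc t) 1 = real k"
    using Suc.prems by (intro Suc.IH) auto
  moreover have "Q t 0 + Q t 1 = 1"
    using Suc.prems by simp
  ultimately show ?case
    unfolding val_k_ex_action1_Suc[where Q = Q and t = t, OF \<open>Q t 0 + Q t 1 = 1\<close>] by simp
qed

lemma val_k_ex_action1_bad_state:
  assumes "\<And>t'. t \<le> t' \<Longrightarrow> t' \<le> t + k \<Longrightarrow> Q t' 0 + Q t' 1 = 1"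
  shows "val_k {0,1} {0,1} ex_reward (sc_kernel ex_conf_kernel Q) (det_policy 1) (Suc k) t 1
       = real k / 2"
proof -
  have "val_k {0,1} {0,1} ex_reward (sc_kernel ex_conf_kernel Q) (det_policy 1) k (Suc t) 0
      + val_k {0,1} {0,1} ex_reward (sc_kernel ex_conf_kernel Q) (det_policy 1) k (Suc t) 1 = real k"
    using assms by (intro val_k_ex_action1_sum) auto
  moreover have "Q t 0 + Q t 1 = 1"
    using assms by simp
  ultimately show ?thesis
    unfolding val_k_ex_action1_Suc[where Q = Q and t = t, OF \<open>Q t 0 + Q t 1 = 1\<close>] by simp
qed

lemma val_k_ex_trapped:
  assumes "\<And>t'. t \<le> t' \<Longrightarrow> t' < t + k \<Longrightarrow> \<pi> t' 1 0 = 1 \<and> \<pi> t' 1 1 = 0"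
  shows "val_k {0,1} {0,1} ex_reward (sc_kernel ex_conf_kernel (point_conf 1)) \<pi> k t 1 = real k / 8"
  using assms
proof (induction k arbitrary: t)
  case 0
  then show ?case by simp
next
  case (Suc k)
  have "val_k {0,1} {0,1} ex_reward (sc_kernel ex_conf_kernel (point_conf 1)) \<pi> k (Suc t) 1
      = real k / 8"
    using Suc.prems by (intro Suc.IH) auto
  moreover have "\<pi> t 1 0 = 1" "\<pi> t 1 1 = 0"
    using Suc.prems[of t] by auto
  moreover have "sc_kernel ex_conf_kernel (point_conf 1) t 1 0 0 = 0"
    "sc_kernel ex_conf_kernel (point_conf 1) t 1 0 1 = 1"
    unfolding sc_kernel_two_point ex_conf_kernel_def point_conf_def by simp_all
  ultimately show ?case
    unfolding val_k_two_point by simp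
qed

lemma robust_sc_value_ex_action1_ge:
  assumes "0 \<le> \<sigma>" "1 \<le> T"
  shows "real (T - 1) / 2
       \<le> robust_sc_value {0,1} {0,1} T ex_reward ex_conf_kernel (\<lambda>t c. 1/2) \<sigma> (det_policy 1) 1 1"
  unfolding robust_sc_value_def
proof (rule cINF_greatest)
  have "(\<lambda>t c. 1/2) \<in> unc_sc T (\<lambda>t c. 1/2) \<sigma>"
    using assms(1) unfolding unc_sc_def is_dist_def tv_dist_def conf_space_def by simp
  then show "unc_sc T (\<lambda>t c. 1/2) \<sigma> \<noteq> {}" by blast
next
  fix Q assume "Q \<in> unc_sc T (\<lambda>t c. 1/2) \<sigma>"
  then have "Q t 0 + Q t 1 = 1" if "t \<in> {1..T}" for t
    using that unfolding unc_sc_def is_dist_def conf_space_def by auto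
  then have "val_k {0,1} {0,1} ex_reward (sc_kernel ex_conf_kernel Q) (det_policy 1) (Suc (T - 1)) 1 1
      = real (T - 1) / 2"
    using \<open>1 \<le> T\<close> by (intro val_k_ex_action1_bad_state) auto
  then show "real (T - 1) / 2 \<le> sc_value {0,1} {0,1} T ex_reward ex_conf_kernel Q (det_policy 1) 1 1"
    using \<open>1 \<le> T\<close> unfolding sc_value_def fh_value_def by simp
qed

lemma robust_sc_value_ex_avoiding_action1_le:
  assumes "is_policy {0,1} {0,1} T \<pi>" "\<And>t. t \<in> {1..T} \<Longrightarrow> \<pi> t 1 1 = 0" "1/2 \<le> \<sigma>"
  shows "robust_sc_value {0,1} {0,1} T ex_reward ex_conf_kernel (\<lambda>t c. 1/2) \<sigma> \<pi> 1 1 \<le> real T / 8"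
proof -
  have "point_conf 1 \<in> unc_sc T (\<lambda>t c. 1/2) \<sigma>"
    using assms(3) unfolding unc_sc_def is_dist_def tv_dist_def conf_space_def point_conf_def by simp
  then have "robust_sc_value {0,1} {0,1} T ex_reward ex_conf_kernel (\<lambda>t c. 1/2) \<sigma> \<pi> 1 1
      \<le> sc_value {0,1} {0,1} T ex_reward ex_conf_kernel (point_conf 1) \<pi> 1 1"
    using assms(1) by (intro robust_sc_value_le_sc_value ex_is_sc_mdp ex_is_reward) auto
  also have "\<dots> = real T / 8"
    unfolding sc_value_def fh_value_def diff_Suc_1
  proof (rule val_k_ex_trapped)
    fix t assume "1 \<le> t" "t < 1 + T"
    then have "t \<in> {1..T}" by simp
    with assms(1,2) show "\<pi> t 1 0 = 1 \<and> \<pi> t 1 1 = 0"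
      unfolding is_policy_def is_dist_two_point by fastforce
  qed
  finally show ?thesis .
qed

theorem theorem2:
  fixes T :: nat and \<sigma>\<^sub>2 :: real
  assumes "T \<ge> 2" and "1/2 < \<sigma>\<^sub>2" and "\<sigma>\<^sub>2 \<le> 1"
  shows "\<exists>(S :: nat set) (A :: nat set) P0 r K Pc (\<phi> :: nat \<Rightarrow> real).
    finite S \<and> S \<noteq> {} \<and> finite A \<and> A \<noteq> {} \<and>
    is_kernel S A T P0 \<and> is_reward S A T r \<and>
    is_sc_mdp S A T K Pc \<and> sc_equivalent S A T P0 K Pc \<and>
    is_dist S \<phi> \<and>
    (\<forall>piR. optimal_rsc_policy S A T r K Pc \<sigma>\<^sub>2 piR \<longrightarrow>
      (\<forall>\<sigma>\<^sub>1 \<in> {0..1}. \<forall>piM. optimal_rmdp_policy S A T r P0 \<sigma>\<^sub>1 piM \<longrightarrow>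
        (\<Sum>s\<in>S. \<phi> s * robust_sc_value S A T r K Pc \<sigma>\<^sub>2 piR 1 s)
        - (\<Sum>s\<in>S. \<phi> s * robust_sc_value S A T r K Pc \<sigma>\<^sub>2 piM 1 s) \<ge> real T / 8))"
proof (intro exI[of _ "{0,1}"] exI[of _ "\<lambda>t s a s'. 1/2"] exI[of _ ex_reward]
    exI[of _ ex_conf_kernel] exI[of _ "\<lambda>t c. 1/2"] exI[of _ "\<lambda>s. of_bool (s = 1)"]
    conjI allI impI ballI)
  let ?V = "robust_sc_value {0,1} {0,1} T ex_reward ex_conf_kernel (\<lambda>t c. 1/2) \<sigma>\<^sub>2"
  fix \<pi>R \<sigma>\<^sub>1 \<pi>M
  assume opt_R: "optimal_rsc_policy {0,1} {0,1} T ex_reward ex_conf_kernel (\<lambda>t c. 1/2) \<sigma>\<^sub>2 \<pi>R"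
    and "\<sigma>\<^sub>1 \<in> {0..1}"
    and opt_M: "optimal_rmdp_policy {0,1} {0,1} T ex_reward (\<lambda>t s a s'. 1/2) \<sigma>\<^sub>1 \<pi>M"
  have "real (T - 1) / 2 \<le> ?V (det_policy 1) 1 1"
    using assms by (intro robust_sc_value_ex_action1_ge) auto
  also have "\<dots> \<le> ?V \<pi>R 1 1"
    using opt_R det_policy_is_policy[of "{0,1}" 1] assms(1)
    unfolding optimal_rsc_policy_def by simp
  finally have "real (T - 1) / 2 \<le> ?V \<pi>R 1 1" .
  moreover have "?V \<pi>M 1 1 \<le> real T / 8"
    using opt_M optimal_rmdp_policy_avoids_action1[OF opt_M] \<open>\<sigma>\<^sub>1 \<in> {0..1}\<close> assms(2)
    by (intro robust_sc_value_ex_avoiding_action1_le) (auto simp: optimal_rmdp_policy_def)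
  ultimately show "real T / 8 \<le> (\<Sum>s\<in>{0,1}. of_bool (s = 1) * ?V \<pi>R 1 s)
      - (\<Sum>s\<in>{0,1}. of_bool (s = 1) * ?V \<pi>M 1 s)"
    using assms(1) by (simp add: of_nat_diff)
qed (auto simp: is_kernel_def is_dist_def ex_is_reward is_sc_mdp_def conf_space_def
    sc_equivalent_def sc_kernel_two_point ex_conf_kernel_def)

end
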